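(* Let $(G,\cdot)$ be a WIPL with identity $e$, let $(H,\circ)$ be a WIPL with identity $e'$, and let $(A,B,C)$ be an isotopism from $(G,\cdot)$ to $(H,\circ)$. Put $a'=eA$ and $b'=eB$. Assume that either $(x\circ y)^{\rho'}=x^{\rho'}\circ y^{\lambda'}$ for all $x,y\in H$, or $(x\circ y)^{\lambda'}=x^{\lambda'}\circ y^{\rho'}$ for all $x,y\in H$. Then $C$ is an isomorphism from $(G,\cdot)$ onto $(H,\circ)$ if and only if $(L_{b'}',R_{a'}',I)\in AUT(H,\circ)$. Moreover, in that case $(G,\cdot)$ and $(H,\circ)$ are (isomorphic) cross inverse property loops, $R_{a'}'L_{b'}'=I$ and $b'\circ a'=e'$.
   Context: Maps are written on the right of their arguments ($xU$) and composed left to right: $UV$ means first apply $U$, then $V$; $I$ is the identity map. For a loop $(L,\cdot)$ with identity $e$, $x^\rho$ and $x^\lambda$ denote the right and left inverses of $x$ ($x x^\rho=e=x^\lambda x$). For the loop $(H,\circ)$ with identity $e'$, $y^{\rho'}$, $y^{\lambda'}$ are the right and left inverses of $y$ in $H$, and $L_y':z\mapsto y\circ z$, $R_y':z\mapsto z\circ y$. $L$ is a weak inverse property loop (WIPL) if $xy\cdot z=e$ implies $x\cdot yz=e$ for all $x,y,z\in L$; it is a cross inverse property loop (CIPL) if $xy\cdot x^\rho=y$ for all $x,y\in L$. A triple $(U,V,W)$ of bijections $G\to H$ between loops $(G,\cdot)$ and $(H,\circ)$ is an isotopism if $xU\circ yV=(x\cdot y)W$ for all $x,y\in G$; an autotopism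 is an isotopism of a loop to itself, and $AUT(H,\circ)$ denotes the group of autotopisms under componentwise composition. *)

theory Defs
  imports Main
begin

definition loop :: "'a set \<Rightarrow> ('a \<Rightarrow> 'a \<Rightarrow> 'a) \<Rightarrow> 'a \<Rightarrow> bool" where
  "loop S op e \<longleftrightarrow>
     (\<forall>x\<in>S. \<forall>y\<in>S. op x y \<in> S) \<and> e \<in> S \<and>
     (\<forall>x\<in>S. op e x = x \<and> op x e = x) \<and>
     (\<forall>a\<in>S. \<forall>b\<in>S. (\<exists>!x. x \<in> S \<and> op a x = b) \<and> (\<exists>!y. y \<in> S \<and> op y a = b))"

definition rinv :: "'a set \<Rightarrow> ('a \<Rightarrow> 'a \<Rightarrow> 'a) \<Rightarrow> 'a \<Rightarrow> 'a \<Rightarrow> 'a" where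
  "rinv S op e x = (THE y. y \<in> S \<and> op x y = e)"

definition linv :: "'a set \<Rightarrow> ('a \<Rightarrow> 'a \<Rightarrow> 'a) \<Rightarrow> 'a \<Rightarrow> 'a \<Rightarrow> 'a" where
  "linv S op e x = (THE y. y \<in> S \<and> op y x = e)"

definition WIPL :: "'a set \<Rightarrow> ('a \<Rightarrow> 'a \<Rightarrow> 'a) \<Rightarrow> 'a \<Rightarrow> bool" where
  "WIPL S op e \<longleftrightarrow> loop S op e \<and>
     (\<forall>x\<in>S. \<forall>y\<in>S. \<forall>z\<in>S. op (op x y) z = e \<longrightarrow> op x (op y z) = e)"

definition CIPL :: "'a set \<Rightarrow> ('a \<Rightarrow> 'a \<Rightarrow> 'a) \<Rightarrow> 'a \<Rightarrow> bool" where
  "CIPL S op e \<longleftrightarrow> loop S op e \<and>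
     (\<forall>x\<in>S. \<forall>y\<in>S. op (op x y) (rinv S op e x) = y)"

definition isotopism ::
  "'a set \<Rightarrow> ('a \<Rightarrow> 'a \<Rightarrow> 'a) \<Rightarrow> 'b set \<Rightarrow> ('b \<Rightarrow> 'b \<Rightarrow> 'b) \<Rightarrow>
   ('a \<Rightarrow> 'b) \<Rightarrow> ('a \<Rightarrow> 'b) \<Rightarrow> ('a \<Rightarrow> 'b) \<Rightarrow> bool" where
  "isotopism G op H op' U V W \<longleftrightarrow>
     bij_betw U G H \<and> bij_betw V G H \<and> bij_betw W G H \<and>
     (\<forall>x\<in>G. \<forall>y\<in>G. op' (U x) (V y) = W (op x y))"

definition autotopism ::
  "'b set \<Rightarrow> ('b \<Rightarrow> 'b \<Rightarrow> 'b) \<Rightarrow> ('b \<Rightarrow> 'b) \<Rightarrow> ('b \<Rightarrow> 'b) \<Rightarrow> ('b \<Rightarrow> 'b) \<Rightarrow> bool" where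
  "autotopism H op U V W \<longleftrightarrow> isotopism H op H op U V W"

definition loop_isomorphism ::
  "'a set \<Rightarrow> ('a \<Rightarrow> 'a \<Rightarrow> 'a) \<Rightarrow> 'b set \<Rightarrow> ('b \<Rightarrow> 'b \<Rightarrow> 'b) \<Rightarrow> ('a \<Rightarrow> 'b) \<Rightarrow> bool" where
  "loop_isomorphism G op H op' C \<longleftrightarrow>
     bij_betw C G H \<and> (\<forall>x\<in>G. \<forall>y\<in>G. C (op x y) = op' (C x) (C y))"

end

theory Submission
  imports Defs
begin

(* Write R_u, L_v for the right and left translations of (H,o).  For an isotopism
   (A,B,C) from G to H with a' = eA, b' = eB one has xC = xA o b' and yC = a' o yB,
   so C is an isomorphism iff (R_b', L_a', I) is an autotopism of H (lemma
   isomorphism_iff_rl_autotopic); this needs only that G is a loop.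

   On the side of H, the weak inverse property together with either inverse law
   (xy)^rho = x^rho y^lambda or (xy)^lambda = x^lambda y^rho forces H to be a cross
   inverse property loop with two-sided inverses (lemma cip_loop_of_WIPL).  In such a loop
   J : x |-> x^rho is an involutive automorphism and L_u R_(u^rho) = I = R_(u^rho) L_u;
   substituting through these translations and applying J shows that
   (L_u, R_v, I) and (R_u, L_v, I) are autotopisms for exactly the same u, v, and
   that then uv = e (locale cip_loop).  Combining both facts gives the equivalence
   of the theorem; the remaining claims follow because isomorphisms transfer the
   cross inverse property back to G and because b'a' = e' makes a' = b'^rho. *)

locale loop_on =
  fixes S :: "'a set" and op :: "'a \<Rightarrow> 'a \<Rightarrow> 'a" and e :: 'a
  assumes is_loop: "loop S op e"
begin

abbreviation ri :: "'a \<Rightarrow> 'a" where "ri \<equiv> rinv S op e"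
abbreviation li :: "'a \<Rightarrow> 'a" where "li \<equiv> linv S op e"

lemma closed: "x \<in> S \<Longrightarrow> y \<in> S \<Longrightarrow> op x y \<in> S"
  and unit: "e \<in> S"
  and lid [simp]: "x \<in> S \<Longrightarrow> op e x = x"
  and rid [simp]: "x \<in> S \<Longrightarrow> op x e = x"
  using is_loop unfolding loop_def by blast+

lemma left_division: "a \<in> S \<Longrightarrow> b \<in> S \<Longrightarrow> \<exists>!x. x \<in> S \<and> op a x = b"
  using is_loop unfolding loop_def by simp

lemma right_division: "a \<in> S \<Longrightarrow> b \<in> S \<Longrightarrow> \<exists>!y. y \<in> S \<and> op y a = b"
  using is_loop unfolding loop_def by simp

lemma lcancel: "a \<in> S \<Longrightarrow> x \<in> S \<Longrightarrow> y \<in> S \<Longrightarrow> op a x = op a y \<Longrightarrow> x = y"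
  using left_division[of a "op a x"] closed by (metis (no_types, lifting))

lemma rcancel: "a \<in> S \<Longrightarrow> x \<in> S \<Longrightarrow> y \<in> S \<Longrightarrow> op x a = op y a \<Longrightarrow> x = y"
  using right_division[of a "op x a"] closed by (metis (no_types, lifting))

lemma rinv: "x \<in> S \<Longrightarrow> ri x \<in> S \<and> op x (ri x) = e"
  unfolding rinv_def by (rule theI') (rule left_division[OF _ unit])

lemma linv: "x \<in> S \<Longrightarrow> li x \<in> S \<and> op (li x) x = e"
  unfolding linv_def by (rule theI') (rule right_division[OF _ unit])

lemma rinv_eq: "x \<in> S \<Longrightarrow> y \<in> S \<Longrightarrow> op x y = e \<Longrightarrow> ri x = y"
  using rinv[of x] lcancel[of x "ri x" y] by simp

lemma linv_eq: "x \<in> S \<Longrightarrow> y \<in> S \<Longrightarrow> op y x = e \<Longrightarrow> li x = y"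
  using linv[of x] rcancel[of x "li x" y] by simp

lemma rinv_linv: "x \<in> S \<Longrightarrow> ri (li x) = x"
  using linv[of x] rinv_eq[of "li x" x] by simp

lemma linv_rinv: "x \<in> S \<Longrightarrow> li (ri x) = x"
  using rinv[of x] linv_eq[of "ri x" x] by simp

lemma bij_left_translation:
  assumes "u \<in> S" shows "bij_betw (\<lambda>z. op u z) S S"
proof (rule bij_betwI')
  show "\<exists>x\<in>S. y = op u x" if "y \<in> S" for y
    using left_division[OF assms that] by metis
qed (use assms lcancel closed in blast)+

lemma bij_right_translation:
  assumes "u \<in> S" shows "bij_betw (\<lambda>z. op z u) S S"
proof (rule bij_betwI')
  show "\<exists>x\<in>S. y = op x u" if "y \<in> S" for y
    using right_division[OF assms that] by metis
qed (use assms rcancel closed in blast)+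

end

(* (L_u, R_v, I) is an autotopism: (ux)(yv) = xy for all x, y.  Stated as an
   identity, since bijectivity of translations is automatic in a loop. *)
definition lr_autotopic :: "'a set \<Rightarrow> ('a \<Rightarrow> 'a \<Rightarrow> 'a) \<Rightarrow> 'a \<Rightarrow> 'a \<Rightarrow> bool" where
  "lr_autotopic S op u v \<longleftrightarrow> (\<forall>x\<in>S. \<forall>y\<in>S. op (op u x) (op y v) = op x y)"

definition rl_autotopic :: "'a set \<Rightarrow> ('a \<Rightarrow> 'a \<Rightarrow> 'a) \<Rightarrow> 'a \<Rightarrow> 'a \<Rightarrow> bool" where
  "rl_autotopic S op u v \<longleftrightarrow> (\<forall>x\<in>S. \<forall>y\<in>S. op (op x u) (op v y) = op x y)"

context loop_on
begin

(* Taking x = y = e shows that u and v are mutually inverse. *)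
lemma lr_autotopic_unit:
  assumes "lr_autotopic S op u v" "u \<in> S" "v \<in> S" shows "op u v = e"
  using assms unit unfolding lr_autotopic_def by (metis lid rid)

lemma rl_autotopic_unit:
  assumes "rl_autotopic S op u v" "u \<in> S" "v \<in> S" shows "op u v = e"
  using assms unit unfolding rl_autotopic_def by (metis lid rid)

lemma autotopism_translations_iff:
  assumes "u \<in> S" "v \<in> S"
  shows "autotopism S op (\<lambda>z. op u z) (\<lambda>z. op z v) (\<lambda>z. z) \<longleftrightarrow> lr_autotopic S op u v"
  using bij_left_translation[OF assms(1)] bij_right_translation[OF assms(2)] bij_betw_id
  unfolding autotopism_def isotopism_def lr_autotopic_def id_def by blast

end

locale cip_loop = loop_on +
  assumes two_sided_inverse: "x \<in> S \<Longrightarrow> li x = ri x"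
    and cross_inverse: "x \<in> S \<Longrightarrow> y \<in> S \<Longrightarrow> op (op x y) (ri x) = y"
begin

lemma rinv_closed: "x \<in> S \<Longrightarrow> ri x \<in> S"
  using rinv by blast

lemma rinv_rinv: "x \<in> S \<Longrightarrow> ri (ri x) = x"
  using linv_rinv[of x] two_sided_inverse[OF rinv_closed, of x] by simp

lemma cross_inverse_mirror: "x \<in> S \<Longrightarrow> y \<in> S \<Longrightarrow> op x (op y (ri x)) = y"
  using cross_inverse[of x "op y (ri x)"] rcancel[of "ri x" "op x (op y (ri x))" y]
    rinv_closed closed by simp

lemma rinv_hom: "x \<in> S \<Longrightarrow> y \<in> S \<Longrightarrow> ri (op x y) = op (ri x) (ri y)"
proof -
  assume xy: "x \<in> S" "y \<in> S"
  define z where "z = op x y"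
  have z: "z \<in> S" using xy closed z_def by blast
  have "op y (ri z) = ri x"
    using cross_inverse[OF z rinv_closed[OF xy(1)]] cross_inverse[OF xy] z_def by simp
  then show ?thesis
    using cross_inverse[OF xy(2) rinv_closed[OF z]] z_def by simp
qed

lemma CIPL: "CIPL S op e"
  using is_loop cross_inverse unfolding CIPL_def by blast

(* Since L_u and R_(u^rho) are mutually inverse, substituting x := ux and
   y := yu^rho turns (L_u, R_(u^rho), I) into (R_(u^rho), L_u, I) and back. *)
lemma lr_iff_rl_swapped:
  assumes u: "u \<in> S" and v_def: "v = ri u"
  shows "lr_autotopic S op u v \<longleftrightarrow> rl_autotopic S op v u"
proof -
  have v: "v \<in> S" using u v_def rinv_closed by blast
  have cancel: "op (op u x) v = x" "op u (op x v) = x" if "x \<in> S" for x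
    using cross_inverse cross_inverse_mirror u v_def that by auto
  show ?thesis unfolding lr_autotopic_def rl_autotopic_def
  proof (intro iffI ballI)
    fix p q assume lr: "\<forall>x\<in>S. \<forall>y\<in>S. op (op u x) (op y v) = op x y" and pq: "p \<in> S" "q \<in> S"
    have "op (op u (op p v)) (op (op u q) v) = op (op p v) (op u q)"
      using lr pq u v closed by blast
    then show "op (op p v) (op u q) = op p q" using cancel pq by simp
  next
    fix x y assume rl: "\<forall>p\<in>S. \<forall>q\<in>S. op (op p v) (op u q) = op p q" and xy: "x \<in> S" "y \<in> S"
    have "op (op (op u x) v) (op u (op y v)) = op (op u x) (op y v)"
      using rl xy u v closed by blast
    then show "op (op u x) (op y v) = op x y" using cancel xy by simp
  qed
qed

(* Conjugating with the automorphism J exchanges u and u^rho in (R_u, L_(u^rho), I). *)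
lemma rl_autotopic_swap:
  assumes u: "u \<in> S" and v_def: "v = ri u" and rl: "rl_autotopic S op u v"
  shows "rl_autotopic S op v u"
  unfolding rl_autotopic_def
proof (intro ballI)
  fix p q assume pq: "p \<in> S" "q \<in> S"
  have v: "v \<in> S" and ri_u: "ri u = v" and ri_v: "ri v = u"
    using u v_def rinv_closed rinv_rinv by auto
  have "op (op p v) (op u q) = ri (op (op (ri p) u) (op v (ri q)))"
    using pq u v by (simp add: rinv_hom rinv_closed rinv_rinv closed ri_u ri_v)
  also have "\<dots> = ri (op (ri p) (ri q))"
    using rl pq rinv_closed unfolding rl_autotopic_def by simp
  also have "\<dots> = op p q"
    using pq by (simp add: rinv_hom rinv_closed rinv_rinv)
  finally show "op (op p v) (op u q) = op p q" .
qed

lemma lr_iff_rl: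
  assumes u: "u \<in> S" and v: "v \<in> S"
  shows "lr_autotopic S op u v \<longleftrightarrow> rl_autotopic S op u v"
proof
  assume lr: "lr_autotopic S op u v"
  then have v_def: "v = ri u"
    using lr_autotopic_unit u v rinv_eq by metis
  then have u_def: "u = ri v" using rinv_rinv[OF u] by simp
  have "rl_autotopic S op v u" using lr_iff_rl_swapped[OF u v_def] lr by blast
  then show "rl_autotopic S op u v" using rl_autotopic_swap[OF v u_def] by blast
next
  assume rl: "rl_autotopic S op u v"
  then have v_def: "v = ri u"
    using rl_autotopic_unit u v rinv_eq by metis
  have "rl_autotopic S op v u" using rl_autotopic_swap[OF u v_def rl] .
  then show "lr_autotopic S op u v" using lr_iff_rl_swapped[OF u v_def] by blast
qed

end

locale wip_loop = loop_on +
  assumes weak_inverse: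
    "x \<in> S \<Longrightarrow> y \<in> S \<Longrightarrow> z \<in> S \<Longrightarrow> op (op x y) z = e \<Longrightarrow> op x (op y z) = e"
begin

lemma weak_inverse_converse:
  assumes xyz: "x \<in> S" "y \<in> S" "z \<in> S" and e: "op x (op y z) = e"
  shows "op (op x y) z = e"
proof -
  have xy: "op x y \<in> S" using closed xyz by blast
  define c where "c = ri (op x y)"
  have c: "c \<in> S" "op (op x y) c = e" using rinv[OF xy] c_def by auto
  then have "op x (op y c) = e" using weak_inverse[OF xyz(1,2)] by blast
  then have "ri x = op y c" using rinv_eq[OF xyz(1) closed[OF xyz(2) c(1)]] by blast
  moreover have "ri x = op y z" using rinv_eq[OF xyz(1) closed[OF xyz(2,3)] e] .
  ultimately have "c = z" using lcancel[OF xyz(2) c(1) xyz(3)] by simp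
  then show ?thesis using c by simp
qed

lemma rinv_of_product:
  assumes xy: "x \<in> S" "y \<in> S" shows "op y (ri (op x y)) = ri x"
proof -
  have "ri (op x y) \<in> S" "op (op x y) (ri (op x y)) = e" using rinv closed xy by auto
  then have "op x (op y (ri (op x y))) = e" using weak_inverse xy by blast
  then show ?thesis using rinv_eq closed xy \<open>ri (op x y) \<in> S\<close> by metis
qed

lemma linv_of_product:
  assumes xy: "x \<in> S" "y \<in> S" shows "op (li (op x y)) x = li y"
proof -
  have "li (op x y) \<in> S" "op (li (op x y)) (op x y) = e" using linv closed xy by auto
  then have "op (op (li (op x y)) x) y = e" using weak_inverse_converse xy by blast
  then show ?thesis using linv_eq closed xy \<open>li (op x y) \<in> S\<close> by metis
qed

(* With the law (xy)^rho = x^rho y^lambda, the previous identity becomes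
   y(uy^lambda) = u; taking u = e gives two-sided inverses, and then the cross
   inverse property follows by left cancellation. *)
lemma cip_loop_of_rinv_law:
  assumes law: "\<forall>x\<in>S. \<forall>y\<in>S. ri (op x y) = op (ri x) (li y)"
  shows "cip_loop S op e"
proof -
  have key: "op y (op u (li y)) = u" if "y \<in> S" "u \<in> S" for y u
  proof -
    have "li u \<in> S" using linv that by blast
    then have "op y (ri (op (li u) y)) = u" using rinv_of_product rinv_linv that by simp
    moreover have "ri (op (li u) y) = op u (li y)" using law that \<open>li u \<in> S\<close> rinv_linv by simp
    ultimately show ?thesis by simp
  qed
  have two_sided: "li x = ri x" if "x \<in> S" for x
    using key[OF that unit] that linv rinv_eq[of x "li x"] unit by auto
  have "op (op x y) (ri x) = y" if "x \<in> S" "y \<in> S" for x y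
  proof -
    have "op x (op (op x y) (li x)) = op x y" using key that closed by blast
    then have "op (op x y) (li x) = y" using lcancel that closed linv by metis
    then show ?thesis using two_sided that by simp
  qed
  with two_sided show ?thesis by unfold_locales
qed

(* Dually, the law (xy)^lambda = x^lambda y^rho yields (x y^rho) x^rho = y^lambda,
   from which two-sided inverses and the cross inverse property follow. *)
lemma cip_loop_of_linv_law:
  assumes law: "\<forall>x\<in>S. \<forall>y\<in>S. li (op x y) = op (li x) (ri y)"
  shows "cip_loop S op e"
proof -
  have key: "op (op x (ri y)) (ri x) = li y" if "x \<in> S" "y \<in> S" for x y
  proof -
    have "ri x \<in> S" using rinv that by blast
    then have "op (li (op (ri x) y)) (ri x) = li y" using linv_of_product that by blast
    then show ?thesis using law that \<open>ri x \<in> S\<close> linv_rinv by simp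
  qed
  have two_sided: "li x = ri x" if "x \<in> S" for x
    using key[OF that that] that rinv by auto
  have "op (op x y) (ri x) = y" if "x \<in> S" "y \<in> S" for x y
  proof -
    have "li y \<in> S" using linv that by blast
    then have "op (op x (ri (li y))) (ri x) = li (li y)" using key that by blast
    then show ?thesis using rinv_linv two_sided[of "li y"] that \<open>li y \<in> S\<close> by simp
  qed
  with two_sided show ?thesis by unfold_locales
qed

end

lemma cip_loop_of_WIPL:
  assumes wip: "WIPL S op e"
    and law: "(\<forall>x\<in>S. \<forall>y\<in>S. rinv S op e (op x y) = op (rinv S op e x) (linv S op e y))
           \<or> (\<forall>x\<in>S. \<forall>y\<in>S. linv S op e (op x y) = op (linv S op e x) (rinv S op e y))"
  shows "cip_loop S op e"
proof -
  have "wip_loop S op e"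
    using wip unfolding WIPL_def wip_loop_def wip_loop_axioms_def loop_on_def by blast
  then interpret wip_loop S op e .
  from law show ?thesis
    using cip_loop_of_rinv_law cip_loop_of_linv_law by (elim disjE)
qed

(* For an isotopism (A,B,C) from a loop G, C is an isomorphism iff
   (R_(eB), L_(eA), I) is an autotopism of H, because xC = xA o eB and yC = eA o yB. *)
lemma isomorphism_iff_rl_autotopic:
  assumes G: "loop G opG e" and iso: "isotopism G opG H opH A B C"
  shows "loop_isomorphism G opG H opH C \<longleftrightarrow> rl_autotopic H opH (B e) (A e)"
proof -
  interpret G: loop_on G opG e by (rule loop_on.intro[OF G])
  have bij: "bij_betw A G H" "bij_betw B G H" "bij_betw C G H"
    and prod: "\<And>x y. x \<in> G \<Longrightarrow> y \<in> G \<Longrightarrow> opH (A x) (B y) = C (opG x y)"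
    using iso unfolding isotopism_def by auto
  have C_via_A: "C x = opH (A x) (B e)" and C_via_B: "C x = opH (A e) (B x)" if "x \<in> G" for x
    using prod[OF that G.unit] prod[OF G.unit that] that by simp_all
  show ?thesis
  proof
    assume hom: "loop_isomorphism G opG H opH C"
    show "rl_autotopic H opH (B e) (A e)" unfolding rl_autotopic_def
    proof (intro ballI)
      fix p q assume "p \<in> H" "q \<in> H"
      then obtain x y where xy: "x \<in> G" "y \<in> G" "p = A x" "q = B y"
        using bij(1,2) unfolding bij_betw_def by blast
      have "opH (opH p (B e)) (opH (A e) q) = opH (C x) (C y)"
        using xy C_via_A C_via_B by simp
      also have "\<dots> = C (opG x y)" using hom xy unfolding loop_isomorphism_def by simp
      also have "\<dots> = opH p q" using prod xy by simp
      finally show "opH (opH p (B e)) (opH (A e) q) = opH p q" .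
    qed
  next
    assume rl: "rl_autotopic H opH (B e) (A e)"
    have "C (opG x y) = opH (C x) (C y)" if "x \<in> G" "y \<in> G" for x y
    proof -
      have "A x \<in> H" "B y \<in> H" using bij(1,2) that bij_betwE by blast+
      then have "opH (opH (A x) (B e)) (opH (A e) (B y)) = opH (A x) (B y)"
        using rl unfolding rl_autotopic_def by blast
      then have "opH (C x) (C y) = opH (A x) (B y)"
        by (simp only: C_via_A[OF that(1)] C_via_B[OF that(2)])
      then show ?thesis using prod that by simp
    qed
    with bij(3) show "loop_isomorphism G opG H opH C" unfolding loop_isomorphism_def by blast
  qed
qed

(* A loop isomorphic to a CIP loop is a CIP loop: the isomorphism preserves the
   identity and right inverses. *)
lemma CIPL_of_isomorphism:
  assumes G: "loop G opG e" and H: "cip_loop H opH e'"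
    and iso: "loop_isomorphism G opG H opH C"
  shows "CIPL G opG e"
proof -
  interpret G: loop_on G opG e by (rule loop_on.intro[OF G])
  interpret H: cip_loop H opH e' by (rule H)
  have hom: "\<And>x y. x \<in> G \<Longrightarrow> y \<in> G \<Longrightarrow> C (opG x y) = opH (C x) (C y)"
    and inj: "inj_on C G" and into: "\<And>x. x \<in> G \<Longrightarrow> C x \<in> H"
    using iso bij_betwE unfolding loop_isomorphism_def bij_betw_def by auto
  have C_unit: "C e = e'"
    using hom[OF G.unit G.unit] H.lcancel[OF into[OF G.unit] into[OF G.unit] H.unit] G.unit into
    by simp
  have C_rinv: "C (G.ri x) = H.ri (C x)" if "x \<in> G" for x
    using hom[OF that] G.rinv[OF that] C_unit H.rinv_eq into that by metis
  have "opG (opG x y) (G.ri x) = y" if "x \<in> G" "y \<in> G" for x y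
  proof -
    have "C (opG (opG x y) (G.ri x)) = C y"
      using hom G.closed G.rinv that C_rinv H.cross_inverse into by simp
    then show ?thesis using inj G.closed G.rinv that unfolding inj_on_def by blast
  qed
  with G show ?thesis unfolding CIPL_def by blast
qed

theorem mainTheorem5:
  fixes G :: "'a set" and opG :: "'a \<Rightarrow> 'a \<Rightarrow> 'a" and e :: 'a
    and H :: "'b set" and opH :: "'b \<Rightarrow> 'b \<Rightarrow> 'b" and e' :: 'b
    and A B C :: "'a \<Rightarrow> 'b" and a' b' :: 'b
  assumes wG: "WIPL G opG e"
    and wH: "WIPL H opH e'"
    and iso: "isotopism G opG H opH A B C"
    and a'_def: "a' = A e"
    and b'_def: "b' = B e"
    and inv: "(\<forall>x\<in>H. \<forall>y\<in>H. rinv H opH e' (opH x y) = opH (rinv H opH e' x) (linv H opH e' y))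
           \<or> (\<forall>x\<in>H. \<forall>y\<in>H. linv H opH e' (opH x y) = opH (linv H opH e' x) (rinv H opH e' y))"
  shows "(loop_isomorphism G opG H opH C \<longleftrightarrow>
            autotopism H opH (\<lambda>z. opH b' z) (\<lambda>z. opH z a') (\<lambda>z. z))
       \<and> (loop_isomorphism G opG H opH C \<longrightarrow>
            CIPL G opG e \<and> CIPL H opH e' \<and>
            (\<forall>z\<in>H. opH b' (opH z a') = z) \<and> opH b' a' = e')"
proof -
  have loop_G: "loop G opG e" using wG unfolding WIPL_def by blast
  have cip_H: "cip_loop H opH e'" using cip_loop_of_WIPL[OF wH inv] .
  interpret H: cip_loop H opH e' by (rule cip_H)
  have a': "a' \<in> H" and b': "b' \<in> H"
    using iso loop_on.unit[OF loop_on.intro[OF loop_G]] a'_def b'_def bij_betwE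
    unfolding isotopism_def by metis+
  have iso_iff_rl: "loop_isomorphism G opG H opH C \<longleftrightarrow> rl_autotopic H opH b' a'"
    using isomorphism_iff_rl_autotopic[OF loop_G iso] a'_def b'_def by simp
  also have "\<dots> \<longleftrightarrow> lr_autotopic H opH b' a'" using H.lr_iff_rl[OF b' a'] by simp
  also have "\<dots> \<longleftrightarrow> autotopism H opH (\<lambda>z. opH b' z) (\<lambda>z. opH z a') (\<lambda>z. z)"
    using H.autotopism_translations_iff[OF b' a'] by simp
  finally have main: "loop_isomorphism G opG H opH C \<longleftrightarrow>
      autotopism H opH (\<lambda>z. opH b' z) (\<lambda>z. opH z a') (\<lambda>z. z)" .
  have "CIPL G opG e \<and> CIPL H opH e' \<and> (\<forall>z\<in>H. opH b' (opH z a') = z) \<and> opH b' a' = e'"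
    if hom: "loop_isomorphism G opG H opH C"
  proof -
    have unit: "opH b' a' = e'" using hom iso_iff_rl H.rl_autotopic_unit a' b' by blast
    then have "H.ri b' = a'" using H.rinv_eq a' b' by blast
    then have "\<forall>z\<in>H. opH b' (opH z a') = z" using H.cross_inverse_mirror b' by blast
    with unit show ?thesis using CIPL_of_isomorphism[OF loop_G cip_H hom] H.CIPL by blast
  qed
  with main show ?thesis by blast
qed

end
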